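(* Let $\ell,t,s,d,m$ be positive integers with $m\ge d$, and $\mathbb{F}$ a finite field. Suppose $\pi=(\mathsf{Share},\mathsf{Eval},\mathsf{Rec})$ is a $t$-private $s$-server HSS scheme for a non-trivial class $\mathcal{F}\subseteq\mathrm{POLY}_{d,m}(\mathbb{F})^\ell$, which is linear over $\mathbb{F}$, whose $\mathsf{Share}$ is $t$-CNF sharing, and whose download rate equals $(s-dt)/s$. Let $n=\ell s/(s-dt)$. Then there exist a linear code $\mathcal{C}\subseteq\mathbb{F}^n$ of rate $(s-dt)/s$ and a labeling $\mathcal{L}:[n]\to[s]$ with $\Delta_{\mathcal{L}}(\mathcal{C})\ge dt+1$. (Specifically, $\mathcal{C}$ is the row span of the reconstruction matrix of $\pi$, and $\mathcal{L}(r)$ is the server sending the $r$-th downloaded symbol.)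
   Context: $\mathrm{POLY}_{d,m}(\mathbb{F})$: polynomials in $\mathbb{F}[X_1,\ldots,X_m]$ of total degree $\le d$. Amortized HSS for $\mathcal{F}\subseteq\mathrm{POLY}_{d,m}(\mathbb{F})^\ell$: $\ell m$ secrets $x^{(i)}_k\in\mathbb{F}$, $\mathbf{x}^{(i)}=(x^{(i)}_1,\dots,x^{(i)}_m)$, each shared independently by randomized $\mathsf{Share}$ into $s$ shares, server $j$ receiving the $j$-th share of each; given $\mathbf{f}=(f_1,\ldots,f_\ell)\in\mathcal{F}$, server $j$ computes output share $z_j=\mathsf{Eval}(\mathbf{f},j,\text{its shares})\in\mathbb{F}^{n_j}$ (arbitrary function); $\mathsf{Rec}(z_1\circ\cdots\circ z_s)$ must equal $(f_i(\mathbf{x}^{(i)}))_{i\in[\ell]}$ with probability 1 for all secrets and $\mathbf{f}$. $t$-private: any $\le t$ shares of a secret have distribution independent of the secret. Linear: $\mathsf{Share}$ and $\mathsf{Rec}:\mathbb{F}^{\sum n_j}\to\mathbb{F}^\ell$ are $\mathbb{F}$-linear ($\mathsf{Eval}$ arbitrary). Download rate: $\ell/\sum_j n_j$ (ratio of output bits to downloaded bits). $t$-CNF sharing of $x\in\mathbb{F}$ among $s$ servers: choose $y_T\in\mathbb{F}$ for all $T\subseteq[s]$, $|T|=t$, uniformly at random subject to $\sum_T y_T=x$; server $j$ receives $(y_T: j\notin T)$. $\mathcal{F}$ is non-trivial if some $(f_1,\ldots,f_\ell)\in\mathcal{F}$ has every $f_i$ containing (with nonzero coefficient) a monomial in at least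 $d$ distinct variables. A labeling is a surjection $\mathcal{L}:[n]\to[s]$. Labelweight: for $\mathbf{c}\in\mathbb{F}^n$, $\Delta_{\mathcal{L}}(\mathbf{c})=|\{\mathcal{L}(i): c_i\neq0\}|$; for a code $\mathcal{C}$, $\Delta_{\mathcal{L}}(\mathcal{C})=\min_{\mathbf{0}\ne\mathbf{c}\in\mathcal{C}}\Delta_{\mathcal{L}}(\mathbf{c})$. Rate of a linear code of dimension $k$ in $\mathbb{F}^n$ is $k/n$. *)

theory Defs
  imports "HOL-Analysis.Analysis" "HOL-Library.Poly_Mapping" "HOL-Library.Function_Algebras"
begin

text \<open>A monomial is a finitely supported exponent vector  finitely supported nat-to-nat map (variable k is X_(k+1));
  a polynomial over 'f is a finitely supported map from monomials to coefficients.\<close>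

type_synonym 'f mpoly = "(nat \<Rightarrow>\<^sub>0 nat) \<Rightarrow>\<^sub>0 'f"

definition total_deg :: "(nat \<Rightarrow>\<^sub>0 nat) \<Rightarrow> nat" where
  "total_deg a = (\<Sum>k\<in>Poly_Mapping.keys a. Poly_Mapping.lookup a k)"

definition mpoly_eval :: "'f::comm_ring_1 mpoly \<Rightarrow> (nat \<Rightarrow> 'f) \<Rightarrow> 'f" where
  "mpoly_eval p x = (\<Sum>a\<in>Poly_Mapping.keys p. Poly_Mapping.lookup p a * (\<Prod>k\<in>Poly_Mapping.keys a. x k ^ Poly_Mapping.lookup a k))"

definition POLY :: "nat \<Rightarrow> nat \<Rightarrow> ('f::zero) mpoly set" where
  "POLY d m = {p. \<forall>a\<in>Poly_Mapping.keys p. Poly_Mapping.keys a \<subseteq> {0..<m} \<and> total_deg a \<le> d}"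

text \<open>Tuples (f_1..f_l) are functions nat => mpoly with f i for i < l, and 0 beyond.\<close>
definition POLY_tuples :: "nat \<Rightarrow> nat \<Rightarrow> nat \<Rightarrow> (nat \<Rightarrow> ('f::zero) mpoly) set" where
  "POLY_tuples l d m = {fs. (\<forall>i<l. fs i \<in> POLY d m) \<and> (\<forall>i\<ge>l. fs i = 0)}"

definition nontrivial_class :: "nat \<Rightarrow> nat \<Rightarrow> (nat \<Rightarrow> ('f::zero) mpoly) set \<Rightarrow> bool" where
  "nontrivial_class l d Fc = (\<exists>fs\<in>Fc. \<forall>i<l. \<exists>a\<in>Poly_Mapping.keys (fs i). card (Poly_Mapping.keys a) \<ge> d)"

definition tsets :: "nat \<Rightarrow> nat \<Rightarrow> nat set set" where
  "tsets s t = {T. T \<subseteq> {0..<s} \<and> card T = t}"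

text \<open>Randomness of t-CNF sharing of x: (y_T)_T over t-subsets with sum x (zero elsewhere).
  Share is uniform over this set.\<close>
definition cnf_rand :: "nat \<Rightarrow> nat \<Rightarrow> 'f::comm_monoid_add \<Rightarrow> (nat set \<Rightarrow> 'f) set" where
  "cnf_rand s t x = {y. (\<forall>T. T \<notin> tsets s t \<longrightarrow> y T = 0) \<and> (\<Sum>T\<in>tsets s t. y T) = x}"

definition cnf_share :: "nat \<Rightarrow> nat \<Rightarrow> nat \<Rightarrow> (nat set \<Rightarrow> 'f::zero) \<Rightarrow> (nat set \<Rightarrow> 'f)" where
  "cnf_share s t j y = (\<lambda>T. if T \<in> tsets s t \<and> j \<notin> T then y T else 0)"

definition cnf_view :: "nat \<Rightarrow> nat \<Rightarrow> nat set \<Rightarrow> (nat set \<Rightarrow> 'f::zero) \<Rightarrow> (nat \<Rightarrow> nat set \<Rightarrow> 'f)" where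
  "cnf_view s t S y = (\<lambda>j. if j \<in> S then cnf_share s t j y else (\<lambda>_. 0))"

definition cnf_private :: "'f::{finite,comm_monoid_add} itself \<Rightarrow> nat \<Rightarrow> nat \<Rightarrow> bool" where
  "cnf_private _ s t = (\<forall>S. S \<subseteq> {0..<s} \<and> card S \<le> t \<longrightarrow>
     (\<forall>(x::'f) x' v.
        real (card {y\<in>cnf_rand s t x. cnf_view s t S y = v}) / real (card (cnf_rand s t x))
      = real (card {y\<in>cnf_rand s t x'. cnf_view s t S y = v}) / real (card (cnf_rand s t x'))))"

definition offset :: "(nat \<Rightarrow> nat) \<Rightarrow> nat \<Rightarrow> nat" where
  "offset nj j = (\<Sum>j'<j. nj j')"

definition server_of :: "nat \<Rightarrow> (nat \<Rightarrow> nat) \<Rightarrow> nat \<Rightarrow> nat" where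
  "server_of s nj r = (THE j. j < s \<and> offset nj j \<le> r \<and> r < offset nj j + nj j)"

definition concat_out :: "nat \<Rightarrow> (nat \<Rightarrow> nat) \<Rightarrow> (nat \<Rightarrow> nat \<Rightarrow> 'f) \<Rightarrow> nat \<Rightarrow> 'f" where
  "concat_out s nj z r = z (server_of s nj r) (r - offset nj (server_of s nj r))"

definition vscale :: "'f::times \<Rightarrow> (nat \<Rightarrow> 'f) \<Rightarrow> (nat \<Rightarrow> 'f)" where
  "vscale c v = (\<lambda>i. c * v i)"

definition Fvec :: "nat \<Rightarrow> (nat \<Rightarrow> 'f::zero) set" where
  "Fvec n = {v. \<forall>i\<ge>n. v i = 0}"

definition linear_code :: "nat \<Rightarrow> (nat \<Rightarrow> 'f::field) set \<Rightarrow> bool" where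
  "linear_code n C = (C \<subseteq> Fvec n \<and> (\<lambda>_. 0) \<in> C \<and> (\<forall>u\<in>C. \<forall>v\<in>C. (\<lambda>i. u i + v i) \<in> C)
                      \<and> (\<forall>c. \<forall>v\<in>C. vscale c v \<in> C))"

definition code_dim :: "(nat \<Rightarrow> 'f::field) set \<Rightarrow> nat" where
  "code_dim C = vector_space.dim vscale C"

definition code_rate :: "nat \<Rightarrow> (nat \<Rightarrow> 'f::field) set \<Rightarrow> real" where
  "code_rate n C = real (code_dim C) / real n"

definition is_labeling :: "nat \<Rightarrow> nat \<Rightarrow> (nat \<Rightarrow> nat) \<Rightarrow> bool" where
  "is_labeling n s L = (L ` {0..<n} = {0..<s})"

definition labelweight :: "nat \<Rightarrow> (nat \<Rightarrow> nat) \<Rightarrow> (nat \<Rightarrow> 'f::zero) \<Rightarrow> nat" where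
  "labelweight n L c = card {L i | i. i < n \<and> c i \<noteq> 0}"

definition code_labelweight :: "nat \<Rightarrow> (nat \<Rightarrow> nat) \<Rightarrow> (nat \<Rightarrow> 'f::zero) set \<Rightarrow> nat" where
  "code_labelweight n L C = Min {labelweight n L c | c. c \<in> C \<and> c \<noteq> 0}"

definition row_span :: "nat \<Rightarrow> nat \<Rightarrow> (nat \<Rightarrow> nat \<Rightarrow> 'f::field) \<Rightarrow> (nat \<Rightarrow> 'f) set" where
  "row_span l N R = module.span vscale ((\<lambda>i. (\<lambda>r. if r < N then R i r else 0)) ` {0..<l})"

end

theory Submission
  imports Defs
begin

text \<open>
  Let c = sum_i w_i R_i be a combination of the rows of the reconstruction matrix with
  w_i0 nonzero, and suppose the positions where c is nonzero are sent by a set S of at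
  most dt servers. Non-triviality and deg f_i0 <= d give a monomial of f_i0 that is a
  product of d distinct variables K. Cover S by t-sets T_k (k in K) and, for E a subset
  of K, share the indicator of E as the i0-th input, placing all of x_k on the single CNF
  summand y(T_k). Servers in T_k never see x_k, so the alternating sum over E of every
  symbol they send vanishes, and hence so does that of sum_r c_r z_r. By correctness the
  latter is the alternating sum of sum_i w_i f_i over the 0/1 points 1_E, which by Moebius
  inversion is +-w_i0 times the coefficient of that monomial: a contradiction.

  So every nonzero codeword has labelweight > dt; in particular the rows of R are
  independent. Moreover, for every set D of dt servers the positions sent by servers
  outside D determine the codeword, so l <= n - sum_(j in D) n_j. Together with the rate
  hypothesis l s = n (s - dt) this forces all download lengths n_j to be equal, hence
  positive, so the labeling is surjective.
\<close>

section \<open>Positions of the downloaded string\<close>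

lemma offset_Suc: "offset nj (Suc j) = offset nj j + nj j"
  by (simp add: offset_def)

lemma offset_mono: "j \<le> j' \<Longrightarrow> offset nj j \<le> offset nj j'"
  unfolding offset_def by (rule sum_mono2) auto

lemma offset_add_le_sum: "j < s \<Longrightarrow> offset nj j + nj j \<le> (\<Sum>j<s. nj j)"
  using offset_mono[of "Suc j" s nj] by (simp add: offset_Suc offset_def)

lemma server_of_eqI:
  assumes "j < s" "offset nj j \<le> r" "r < offset nj j + nj j"
  shows "server_of s nj r = j"
  unfolding server_of_def
proof (rule the_equality)
  fix j' assume j': "j' < s \<and> offset nj j' \<le> r \<and> r < offset nj j' + nj j'"
  have "\<not> j < j'" "\<not> j' < j"
    using j' assms offset_mono[of "Suc j" j' nj] offset_mono[of "Suc j'" j nj] by (auto simp: offset_Suc)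
  then show "j' = j" by simp
qed (use assms in simp)

lemma server_of_bounds:
  assumes "r < (\<Sum>j<s. nj j)"
  shows "server_of s nj r < s" "offset nj (server_of s nj r) \<le> r"
    "r < offset nj (server_of s nj r) + nj (server_of s nj r)"
proof -
  have "\<exists>j<s. offset nj j \<le> r \<and> r < offset nj j + nj j" if "r < offset nj s" for s
    using that
  proof (induction s)
    case (Suc s)
    then show ?case by (cases "r < offset nj s") (auto simp: offset_Suc less_Suc_eq)
  qed (simp add: offset_def)
  then obtain j where "j < s" "offset nj j \<le> r" "r < offset nj j + nj j"
    using assms by (auto simp: offset_def)
  with server_of_eqI[OF this] show "server_of s nj r < s" "offset nj (server_of s nj r) \<le> r"
    "r < offset nj (server_of s nj r) + nj (server_of s nj r)" by simp_all
qed

lemma server_of_preimage: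
  assumes "j < s"
  shows "{r. r < (\<Sum>j<s. nj j) \<and> server_of s nj r = j} = {offset nj j..<offset nj j + nj j}"
proof (intro set_eqI iffI)
  fix r assume "r \<in> {r. r < (\<Sum>j<s. nj j) \<and> server_of s nj r = j}"
  then show "r \<in> {offset nj j..<offset nj j + nj j}"
    using server_of_bounds(2,3)[of r nj s] by auto
next
  fix r assume "r \<in> {offset nj j..<offset nj j + nj j}"
  then show "r \<in> {r. r < (\<Sum>j<s. nj j) \<and> server_of s nj r = j}"
    using server_of_eqI[OF assms] offset_add_le_sum[OF assms, of nj] by auto
qed

lemma card_server_of_notin:
  assumes "D \<subseteq> {..<s}"
  shows "card {r. r < (\<Sum>j<s. nj j) \<and> server_of s nj r \<notin> D} = (\<Sum>j<s. nj j) - sum nj D"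
proof -
  let ?N = "\<Sum>j<s. nj j"
  have "finite D" using assms finite_subset by blast
  have "{r. r < ?N \<and> server_of s nj r \<in> D} = (\<Union>j\<in>D. {r. r < ?N \<and> server_of s nj r = j})"
    by blast
  then have "card {r. r < ?N \<and> server_of s nj r \<in> D} = (\<Sum>j\<in>D. card {r. r < ?N \<and> server_of s nj r = j})"
    using \<open>finite D\<close> by (simp only:) (rule card_UN_disjoint, auto)
  also have "\<dots> = sum nj D"
    using assms by (intro sum.cong) (auto simp: server_of_preimage)
  finally have "card {r. r < ?N \<and> server_of s nj r \<in> D} = sum nj D" .
  moreover have "{r. r < ?N \<and> server_of s nj r \<notin> D} = {..<?N} - {r. r < ?N \<and> server_of s nj r \<in> D}"
    by blast
  moreover have "card ({..<?N} - {r. r < ?N \<and> server_of s nj r \<in> D})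
      = ?N - card {r. r < ?N \<and> server_of s nj r \<in> D}"
    by (subst card_Diff_subset) auto
  ultimately show ?thesis by simp
qed

lemma is_labeling_server_of:
  assumes "\<And>j. j < s \<Longrightarrow> 0 < nj j"
  shows "is_labeling (\<Sum>j<s. nj j) s (server_of s nj)"
  unfolding is_labeling_def
proof (intro set_eqI iffI)
  fix j assume "j \<in> {0..<s}"
  then have "server_of s nj (offset nj j) = j" "offset nj j < (\<Sum>j<s. nj j)"
    using assms[of j] offset_add_le_sum[of j s nj] by (auto intro: server_of_eqI)
  then show "j \<in> server_of s nj ` {0..<\<Sum>j<s. nj j}" by force
qed (use server_of_bounds in auto)

section \<open>Alternating sums and 0/1 evaluations\<close>

lemma alternating_sum_Pow_eq_0:
  fixes g :: "'a set \<Rightarrow> 'b::comm_ring_1"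
  assumes "finite K" "k \<in> K" and invariant: "\<And>E. E \<subseteq> K - {k} \<Longrightarrow> g (insert k E) = g E"
  shows "(\<Sum>E\<in>Pow K. (-1) ^ card E * g E) = 0"
proof -
  let ?K = "K - {k}"
  have split: "Pow K = Pow ?K \<union> insert k ` Pow ?K"
    using Pow_insert[of k ?K] assms(2) by (simp add: insert_absorb)
  have "inj_on (insert k) (Pow ?K)" unfolding inj_on_def by blast
  then have "(\<Sum>E\<in>insert k ` Pow ?K. (-1) ^ card E * g E)
      = (\<Sum>E\<in>Pow ?K. (-1) ^ card (insert k E) * g (insert k E))"
    by (simp add: sum.reindex)
  also have "\<dots> = - (\<Sum>E\<in>Pow ?K. (-1) ^ card E * g E)"
    unfolding sum_negf[symmetric] using assms(1)
  proof (intro sum.cong refl)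
    fix E assume "E \<in> Pow ?K"
    moreover from this have "finite E" "k \<notin> E" using assms(1) finite_subset by auto
    ultimately show "(-1) ^ card (insert k E) * g (insert k E) = - ((-1) ^ card E * g E)"
      by (simp add: invariant)
  qed
  finally show ?thesis
    using assms(1) by (subst split, subst sum.union_disjoint) auto
qed

lemma mpoly_eval_indicator:
  fixes p :: "'f::comm_ring_1 mpoly"
  shows "mpoly_eval p (indicator E) = (\<Sum>a | a \<in> Poly_Mapping.keys p \<and> Poly_Mapping.keys a \<subseteq> E. Poly_Mapping.lookup p a)"
proof -
  have "(\<Prod>k\<in>Poly_Mapping.keys a. indicator E k ^ Poly_Mapping.lookup a k)
      = (if Poly_Mapping.keys a \<subseteq> E then 1 else (0::'f))" for a
  proof (cases "Poly_Mapping.keys a \<subseteq> E")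
    case False
    then obtain k where "k \<in> Poly_Mapping.keys a" "k \<notin> E" by blast
    then have "indicator E k ^ Poly_Mapping.lookup a k = (0::'f)"
      by (simp add: in_keys_iff power_0_left)
    then have "(\<Prod>k\<in>Poly_Mapping.keys a. indicator E k ^ Poly_Mapping.lookup a k) = (0::'f)"
      using \<open>k \<in> Poly_Mapping.keys a\<close> by (intro prod_zero) auto
    with False show ?thesis by simp
  qed (auto intro!: prod.neutral)
  then show ?thesis
    by (simp add: mpoly_eval_def sum.inter_filter if_distrib[where f="(*) _"] cong: if_cong)
qed

text \<open>Moebius inversion: p(1_S) is the sum over T \<subseteq> S of the coefficients of the monomials
  whose variables are exactly T.\<close>

lemma alternating_sum_mpoly_eval:
  fixes p :: "'f::comm_ring_1 mpoly"
  assumes "finite K"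
  shows "(\<Sum>E\<in>Pow K. (-1) ^ card E * mpoly_eval p (indicator E))
       = (-1) ^ card K * (\<Sum>a | a \<in> Poly_Mapping.keys p \<and> Poly_Mapping.keys a = K. Poly_Mapping.lookup p a)"
proof -
  define F where "F T = (\<Sum>a | a \<in> Poly_Mapping.keys p \<and> Poly_Mapping.keys a = T. Poly_Mapping.lookup p a)" for T
  have "mpoly_eval p (indicator S) = (\<Sum>T\<in>Pow S. F T)" if "finite S" for S
  proof -
    have "(\<Sum>T\<in>Pow S. F T) = (\<Sum>T\<in>Pow S. \<Sum>a | a \<in> {a \<in> Poly_Mapping.keys p. Poly_Mapping.keys a \<subseteq> S}
                                    \<and> Poly_Mapping.keys a = T. Poly_Mapping.lookup p a)"
      unfolding F_def by (intro sum.cong refl arg_cong[where f="\<lambda>A. sum _ A"]) auto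
    also have "\<dots> = mpoly_eval p (indicator S)"
      using that by (subst sum.group) (auto simp: mpoly_eval_indicator)
    finally show ?thesis by simp
  qed
  then have "(-1) ^ card K * F K = (\<Sum>E\<in>Pow K. (-1) ^ card E * mpoly_eval p (indicator E))"
    by (intro inclusion_exclusion_symmetric[where f="\<lambda>T. (-1) ^ card T * F T", OF _ assms])
      (simp flip: mult.assoc power_mult_distrib)
  then show ?thesis by (simp add: F_def)
qed

lemma card_keys_le_total_deg: "card (Poly_Mapping.keys a) \<le> total_deg a"
  unfolding total_deg_def card_eq_sum by (intro sum_mono) (simp add: in_keys_iff Suc_leI)

lemma lookup_eq_1_if_total_deg_le_card:
  assumes "total_deg a \<le> card (Poly_Mapping.keys a)" "k \<in> Poly_Mapping.keys a"
  shows "Poly_Mapping.lookup a k = 1"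
proof (rule ccontr)
  assume "Poly_Mapping.lookup a k \<noteq> 1"
  with assms(2) have "1 < Poly_Mapping.lookup a k" by (simp add: in_keys_iff)
  then have "(\<Sum>k\<in>Poly_Mapping.keys a. 1) < (\<Sum>k\<in>Poly_Mapping.keys a. Poly_Mapping.lookup a k)"
    using assms(2) by (intro sum_strict_mono_ex1) (auto simp: in_keys_iff Suc_leI)
  with assms(1) show False by (simp add: total_deg_def)
qed

lemma POLY_top_monomial_unique:
  assumes "p \<in> POLY d m" "a0 \<in> Poly_Mapping.keys p" "d \<le> card (Poly_Mapping.keys a0)"
  shows "{a. a \<in> Poly_Mapping.keys p \<and> Poly_Mapping.keys a = Poly_Mapping.keys a0} = {a0}"
proof -
  have "a = a0" if a: "a \<in> Poly_Mapping.keys p" "Poly_Mapping.keys a = Poly_Mapping.keys a0" for a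
  proof (rule poly_mapping_eqI)
    have "total_deg a \<le> card (Poly_Mapping.keys a)" "total_deg a0 \<le> card (Poly_Mapping.keys a0)"
      using a assms by (auto simp: POLY_def)
    then show "Poly_Mapping.lookup a k = Poly_Mapping.lookup a0 k" for k
      using lookup_eq_1_if_total_deg_le_card a(2) by (metis in_keys_iff)
  qed
  with assms(2) show ?thesis by auto
qed

lemma alternating_sum_top_monomial:
  fixes p :: "'f::comm_ring_1 mpoly"
  assumes "p \<in> POLY d m" "a0 \<in> Poly_Mapping.keys p" "d \<le> card (Poly_Mapping.keys a0)"
  shows "(\<Sum>E\<in>Pow (Poly_Mapping.keys a0). (-1) ^ card E * mpoly_eval p (indicator E))
       = (-1) ^ card (Poly_Mapping.keys a0) * Poly_Mapping.lookup p a0"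
  by (simp add: alternating_sum_mpoly_eval POLY_top_monomial_unique[OF assms])

lemma alternating_sum_lincomb:
  fixes a :: "'b \<Rightarrow> 'c::comm_ring_1"
  shows "(\<Sum>E\<in>Pow K. (-1) ^ card E * (\<Sum>x\<in>A. a x * g E x))
       = (\<Sum>x\<in>A. a x * (\<Sum>E\<in>Pow K. (-1) ^ card E * g E x))"
  by (simp add: sum_distrib_left mult.left_commute) (rule sum.swap)

lemma alternating_sum_indicator_lincomb:
  fixes fs :: "nat \<Rightarrow> 'f::comm_ring_1 mpoly"
  assumes top: "fs i0 \<in> POLY d m" "a0 \<in> Poly_Mapping.keys (fs i0)" "d \<le> card (Poly_Mapping.keys a0)"
    and "0 < d" "i0 < l"
  shows "(\<Sum>E\<in>Pow (Poly_Mapping.keys a0). (-1) ^ card E *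
            (\<Sum>i<l. w i * mpoly_eval (fs i) (if i = i0 then indicator E else (\<lambda>_. 0))))
       = w i0 * ((-1) ^ card (Poly_Mapping.keys a0) * Poly_Mapping.lookup (fs i0) a0)"
proof -
  let ?K = "Poly_Mapping.keys a0"
  obtain k0 where "k0 \<in> ?K" using assms(3,4) by (metis card.empty ex_in_conv not_le)
  have "(\<Sum>E\<in>Pow ?K. (-1) ^ card E * mpoly_eval (fs i) (if i = i0 then indicator E else (\<lambda>_. 0)))
      = (if i = i0 then (-1) ^ card ?K * Poly_Mapping.lookup (fs i0) a0 else 0)" for i
  proof (cases "i = i0")
    case False
    then show ?thesis
      by simp (rule alternating_sum_Pow_eq_0[OF finite_keys \<open>k0 \<in> ?K\<close>], simp)
  qed (simp add: alternating_sum_top_monomial[OF top])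
  then show ?thesis
    using assms(5) by (simp add: alternating_sum_lincomb if_distrib[where f="(*) _"] cong: if_cong)
qed

section \<open>CNF sharing\<close>

lemma finite_tsets: "finite (tsets s t)"
  unfolding tsets_def by (rule finite_subset[of _ "Pow {0..<s}"]) auto

definition cnf_point_sharing :: "(nat \<Rightarrow> nat set) \<Rightarrow> (nat \<Rightarrow> nat \<Rightarrow> 'f::zero) \<Rightarrow> nat \<Rightarrow> nat \<Rightarrow> nat set \<Rightarrow> 'f" where
  "cnf_point_sharing T x i k = (\<lambda>T'. if T' = T k then x i k else 0)"

lemma cnf_point_sharing_in_cnf_rand:
  "T k \<in> tsets s t \<Longrightarrow> cnf_point_sharing T x i k \<in> cnf_rand s t (x i k)"
  by (simp add: cnf_point_sharing_def cnf_rand_def finite_tsets)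

lemma cnf_share_point_sharing_eq:
  assumes "j \<in> T k" "\<And>i k'. k' \<noteq> k \<Longrightarrow> x i k' = x' i k'"
  shows "cnf_share s t j (cnf_point_sharing T x i k') = cnf_share s t j (cnf_point_sharing T x' i k')"
proof (cases "k' = k")
  case True
  with assms(1) show ?thesis by (auto simp: cnf_share_def cnf_point_sharing_def)
qed (simp add: assms(2) cnf_point_sharing_def cong: if_cong)

text \<open>Extend S to a set of card K * t servers and cut it into card K blocks of size t.\<close>

lemma cover_by_tsets:
  assumes "S \<subseteq> {0..<s}" "card S \<le> card K * t" "card K * t \<le> s" "t \<le> s" "finite K"
  obtains T where "\<And>k. T k \<in> tsets s t" "S \<subseteq> (\<Union>k\<in>K. T k)"
proof -
  obtain S' where S': "S \<subseteq> S'" "S' \<subseteq> {0..<s}" "card S' = card K * t"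
  proof -
    have "finite {0..<s}" by simp
    then show ?thesis
      using exists_subset_between[of S "card K * t" "{0..<s}"] assms(1-3) that by auto
  qed
  then have "card (K \<times> {0..<t}) = card S'"
    by (simp add: card_cartesian_product)
  then obtain h where h: "bij_betw h (K \<times> {0..<t}) S'"
    using finite_same_card_bij[of "K \<times> {0..<t}" S'] assms(5) S'(2) finite_subset[OF S'(2)] by auto
  define T where "T k = (if k \<in> K then h ` ({k} \<times> {0..<t}) else {0..<t})" for k
  have "T k \<in> tsets s t" for k
  proof (cases "k \<in> K")
    case True
    then have "inj_on h ({k} \<times> {0..<t})" "h ` ({k} \<times> {0..<t}) \<subseteq> S'"
    proof -
      have "{k} \<times> {0..<t} \<subseteq> K \<times> {0..<t}" using True by auto
      then show "inj_on h ({k} \<times> {0..<t})" "h ` ({k} \<times> {0..<t}) \<subseteq> S'"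
        using bij_betw_imp_inj_on[OF h] bij_betw_imp_surj_on[OF h] inj_on_subset by blast+
    qed
    with True S'(2) show ?thesis
      by (auto simp: T_def tsets_def card_image card_cartesian_product)
  qed (use assms(4) in \<open>simp add: T_def tsets_def\<close>)
  moreover have "S \<subseteq> (\<Union>k\<in>K. T k)"
  proof
    fix j assume "j \<in> S"
    then obtain k i where "k \<in> K" "i < t" "j = h (k, i)"
      using S'(1) bij_betw_imp_surj_on[OF h] by auto
    then show "j \<in> (\<Union>k\<in>K. T k)" by (auto simp: T_def intro!: bexI[of _ k])
  qed
  ultimately show ?thesis by (rule that)
qed

section \<open>The code spanned by the reconstruction matrix\<close>

interpretation fvec: vector_space "vscale :: 'a::field \<Rightarrow> (nat \<Rightarrow> 'a) \<Rightarrow> nat \<Rightarrow> 'a"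
  by unfold_locales (auto simp: vscale_def fun_eq_iff algebra_simps)

definition row_comb :: "nat \<Rightarrow> nat \<Rightarrow> (nat \<Rightarrow> nat \<Rightarrow> 'f) \<Rightarrow> (nat \<Rightarrow> 'f) \<Rightarrow> nat \<Rightarrow> 'f::field" where
  "row_comb l N R w = (\<lambda>r. if r < N then \<Sum>i<l. w i * R i r else 0)"

definition code_row :: "nat \<Rightarrow> (nat \<Rightarrow> nat \<Rightarrow> 'f) \<Rightarrow> nat \<Rightarrow> nat \<Rightarrow> 'f::zero" where
  "code_row N R i = (\<lambda>r. if r < N then R i r else 0)"

lemma row_span_eq_span_code_rows: "row_span l N R = fvec.span (code_row N R ` {..<l})"
  by (simp add: row_span_def code_row_def atLeast0LessThan)

lemma sum_fun_apply: "(\<Sum>i\<in>A. f i) x = (\<Sum>i\<in>A. f i x)"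
  by (induction A rule: infinite_finite_induct) auto

lemma row_comb_eq_sum_code_rows: "row_comb l N R w = (\<Sum>i<l. vscale (w i) (code_row N R i))"
  by (simp add: row_comb_def code_row_def vscale_def fun_eq_iff sum_fun_apply)

lemma code_row_eq_row_comb:
  "i < l \<Longrightarrow> code_row N R i = row_comb l N R (\<lambda>i'. if i' = i then 1 else 0)"
  by (simp add: row_comb_def code_row_def fun_eq_iff if_distrib[where f="\<lambda>x. x * _"] cong: if_cong)

lemma row_comb_diff: "row_comb l N R (\<lambda>i. w i - w' i) r = row_comb l N R w r - row_comb l N R w' r"
  by (simp add: row_comb_def left_diff_distrib sum_subtractf)

lemma row_span_eq_range: "row_span l N R = range (row_comb l N R)"
proof
  have "fvec.subspace (range (row_comb l N R))"
    unfolding fvec.subspace_def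
  proof (intro conjI ballI allI, safe)
    show "0 \<in> range (row_comb l N R)"
      by (rule range_eqI[of _ _ "\<lambda>_. 0"]) (simp add: row_comb_def fun_eq_iff)
    show "row_comb l N R w + row_comb l N R w' \<in> range (row_comb l N R)" for w w'
      by (intro range_eqI[of _ _ "\<lambda>i. w i + w' i"])
        (simp add: row_comb_def fun_eq_iff distrib_right sum.distrib)
    show "vscale c (row_comb l N R w) \<in> range (row_comb l N R)" for c w
      by (intro range_eqI[of _ _ "\<lambda>i. c * w i"])
        (simp add: row_comb_def vscale_def fun_eq_iff sum_distrib_left mult.assoc)
  qed
  then show "row_span l N R \<subseteq> range (row_comb l N R)"
    unfolding row_span_eq_span_code_rows by (intro fvec.span_minimal) (auto simp: code_row_eq_row_comb)
  show "range (row_comb l N R) \<subseteq> row_span l N R"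
    unfolding row_span_eq_span_code_rows row_comb_eq_sum_code_rows
    by (auto intro!: fvec.span_sum fvec.span_scale intro: fvec.span_base)
qed

lemma linear_code_row_span: "linear_code N (row_span l N R)"
  unfolding linear_code_def
proof (intro conjI ballI allI)
  show "row_span l N R \<subseteq> Fvec N"
    by (auto simp: row_span_eq_range row_comb_def Fvec_def)
  show "(\<lambda>_. 0) \<in> row_span l N R"
    using fvec.span_zero by (simp add: row_span_def zero_fun_def)
  show "(\<lambda>i. u i + v i) \<in> row_span l N R" if "u \<in> row_span l N R" "v \<in> row_span l N R" for u v
    using fvec.span_add[OF that[unfolded row_span_def]] by (simp add: row_span_def plus_fun_def)
  show "vscale c v \<in> row_span l N R" if "v \<in> row_span l N R" for c v
    using fvec.span_scale[OF that[unfolded row_span_def]] by (simp add: row_span_def)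
qed

lemma code_dim_row_span:
  fixes R :: "nat \<Rightarrow> nat \<Rightarrow> 'f::field"
  assumes indep: "\<And>w. row_comb l N R w = 0 \<Longrightarrow> \<forall>i<l. w i = 0"
  shows "code_dim (row_span l N R) = l"
proof -
  let ?B = "code_row N R ` {..<l}"
  have "inj_on (code_row N R) {..<l}"
  proof (rule inj_onI)
    fix i j assume ij: "i \<in> {..<l}" "j \<in> {..<l}" "code_row N R i = code_row N R j"
    then have "row_comb l N R (\<lambda>i'. (if i' = i then 1 else 0) - (if i' = j then 1 else 0)) = 0"
      by (simp add: fun_eq_iff row_comb_diff code_row_eq_row_comb[symmetric])
    then have "(\<lambda>i'. (if i' = i then 1 else 0) - (if i' = j then 1 else (0::'f))) i = 0"
      using indep ij(1) by blast
    then show "i = j" by (auto split: if_splits)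
  qed
  have "fvec.independent ?B"
  proof (rule fvec.independent_if_scalars_zero)
    fix f x assume "(\<Sum>x\<in>?B. vscale (f x) x) = 0" "x \<in> ?B"
    then have "row_comb l N R (\<lambda>i. f (code_row N R i)) = 0"
      by (simp add: sum.reindex[OF \<open>inj_on (code_row N R) {..<l}\<close>] row_comb_eq_sum_code_rows)
    with \<open>x \<in> ?B\<close> show "f x = 0" using indep by auto
  qed simp
  then show ?thesis
    using \<open>inj_on (code_row N R) {..<l}\<close>
    by (simp add: code_dim_def row_span_eq_span_code_rows fvec.dim_eq_card_independent card_image)
qed

lemma labelweight_le: "labelweight n L c \<le> n"
proof -
  have "labelweight n L c = card (L ` {i. i < n \<and> c i \<noteq> 0})"
    unfolding labelweight_def by (simp add: setcompr_eq_image)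
  also have "\<dots> \<le> card {i. i < n \<and> c i \<noteq> 0}" by (rule card_image_le) simp
  also have "\<dots> \<le> n" using card_mono[of "{..<n}" "{i. i < n \<and> c i \<noteq> 0}"] by auto
  finally show ?thesis .
qed

lemma code_labelweight_row_span_gt:
  assumes "0 < l" and wt: "\<And>w. \<exists>i<l. w i \<noteq> 0 \<Longrightarrow> b < labelweight N L (row_comb l N R w)"
  shows "b < code_labelweight N L (row_span l N R)"
proof -
  let ?W = "{labelweight N L c | c. c \<in> row_span l N R \<and> c \<noteq> 0}"
  have "?W \<subseteq> {..N}" using labelweight_le by blast
  then have "finite ?W" by (rule finite_subset) simp
  have "b < labelweight N L (row_comb l N R (\<lambda>_. 1))"
    using assms by (intro wt) auto
  then have "row_comb l N R (\<lambda>_. 1) \<noteq> 0"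
    by (auto simp: labelweight_def)
  then have "?W \<noteq> {}" by (auto simp: row_span_eq_range)
  moreover have "b < x" if "x \<in> ?W" for x
  proof -
    from that obtain w where "x = labelweight N L (row_comb l N R w)" "row_comb l N R w \<noteq> 0"
      by (auto simp: row_span_eq_range)
    moreover have "\<exists>i<l. w i \<noteq> 0"
    proof (rule ccontr)
      assume "\<not> (\<exists>i<l. w i \<noteq> 0)"
      then have "row_comb l N R w = 0" by (simp add: row_comb_def fun_eq_iff)
      with \<open>row_comb l N R w \<noteq> 0\<close> show False by simp
    qed
    ultimately show ?thesis using wt by simp
  qed
  ultimately show ?thesis
    using \<open>finite ?W\<close> by (simp add: code_labelweight_def)
qed

text \<open>A combination of the rows is determined by its entries at the positions not sent by D,
  so the injection w \<mapsto> (those entries) gives q^l \<le> q^|P|.\<close>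

lemma row_span_singleton_bound:
  fixes R :: "nat \<Rightarrow> nat \<Rightarrow> 'f::{finite,field}"
  assumes wt: "\<And>w. \<exists>i<l. w i \<noteq> 0 \<Longrightarrow> b < labelweight N L (row_comb l N R w)"
    and D: "finite D" "card D \<le> b"
  shows "l \<le> card {r. r < N \<and> L r \<notin> D}"
proof -
  define P where "P = {r. r < N \<and> L r \<notin> D}"
  define restr where "restr w = restrict (row_comb l N R w) P" for w
  have "inj_on restr (\<Pi>\<^sub>E i\<in>{..<l}. UNIV)"
  proof (rule inj_onI)
    fix w w' assume w: "w \<in> (\<Pi>\<^sub>E i\<in>{..<l}. UNIV)" "w' \<in> (\<Pi>\<^sub>E i\<in>{..<l}. UNIV)" "restr w = restr w'"
    define v where "v = (\<lambda>i. w i - w' i)"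
    have "{L r | r. r < N \<and> row_comb l N R v r \<noteq> 0} \<subseteq> D"
    proof clarify
      fix r assume r: "r < N" "row_comb l N R v r \<noteq> 0"
      show "L r \<in> D"
      proof (rule ccontr)
        assume "L r \<notin> D"
        with r(1) have "row_comb l N R w r = row_comb l N R w' r"
          using fun_cong[OF w(3), of r] by (simp add: restr_def P_def)
        with r(2) show False by (simp add: v_def row_comb_diff)
      qed
    qed
    then have "labelweight N L (row_comb l N R v) \<le> card D"
      unfolding labelweight_def by (rule card_mono[OF D(1)])
    then have "\<not> b < labelweight N L (row_comb l N R v)" using D(2) by simp
    then have "\<forall>i<l. v i = 0" using wt by blast
    then show "w = w'" using w(1,2) by (intro PiE_ext) (auto simp: v_def)
  qed
  moreover have "restr ` (\<Pi>\<^sub>E i\<in>{..<l}. UNIV) \<subseteq> (\<Pi>\<^sub>E r\<in>P. UNIV)"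
    by (auto simp: restr_def)
  moreover have "finite P" by (simp add: P_def)
  ultimately have "card (\<Pi>\<^sub>E i\<in>{..<l}. UNIV :: 'f set) \<le> card (\<Pi>\<^sub>E r\<in>P. UNIV :: 'f set)"
    by (intro card_inj_on_le) (simp_all add: finite_PiE)
  then have "CARD('f) ^ l \<le> CARD('f) ^ card P"
    by (simp add: card_PiE \<open>finite P\<close>)
  moreover have "1 < CARD('f)" using card_mono[of UNIV "{0::'f, 1}"] by simp
  ultimately show ?thesis
    unfolding P_def by (rule power_le_imp_le_exp[rotated])
qed

section \<open>Equal download lengths\<close>

lemma obtain_heaviest_subset:
  fixes f :: "'a \<Rightarrow> nat"
  assumes "finite A" "k \<le> card A"
  obtains D where "D \<subseteq> A" "card D = k" "\<And>D'. D' \<subseteq> A \<Longrightarrow> card D' = k \<Longrightarrow> sum f D' \<le> sum f D"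
proof -
  obtain D0 where "D0 \<subseteq> A" "card D0 = k"
    using obtain_subset_with_card_n[OF assms(2)] by metis
  moreover have "sum f D' < sum f A + 1" if "D' \<subseteq> A" for D'
    using sum_mono2[OF assms(1) that, of f] by simp
  ultimately have "\<exists>D. (D \<subseteq> A \<and> card D = k) \<and>
      (\<forall>D'. D' \<subseteq> A \<and> card D' = k \<longrightarrow> sum f D' \<le> sum f D)"
    by (intro ex_has_greatest_nat[of _ D0 _ "sum f A + 1"]) auto
  with that show ?thesis by blast
qed

lemma heaviest_subset_exchange:
  fixes f :: "'a \<Rightarrow> nat"
  assumes "finite A" "D \<subseteq> A" "card D = k"
    and heaviest: "\<And>D'. D' \<subseteq> A \<Longrightarrow> card D' = k \<Longrightarrow> sum f D' \<le> sum f D"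
    and "x \<in> D" "y \<in> A - D"
  shows "f y \<le> f x"
proof -
  have "finite D" using assms(1,2) finite_subset by blast
  let ?D' = "insert y (D - {x})"
  have "?D' \<subseteq> A" "card ?D' = k"
    using assms \<open>finite D\<close> card_gt_0_iff[of D] by auto
  then have "sum f ?D' \<le> sum f D" by (rule heaviest)
  moreover have "sum f ?D' = f y + sum f (D - {x})" using assms(6) \<open>finite D\<close> by simp
  moreover have "sum f D = f x + sum f (D - {x})" using assms(5) \<open>finite D\<close> by (simp add: sum.remove)
  ultimately show ?thesis by simp
qed

text \<open>A heaviest k-subset D dominates its complement pointwise, and double counting over
  D \<times> (A - D) with the averaging bound forces equality everywhere.\<close>

lemma eq_if_subset_sums_le_average:
  fixes f :: "'a \<Rightarrow> nat"
  assumes "finite A" "0 < k" "k < card A"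
    and average: "\<And>D. D \<subseteq> A \<Longrightarrow> card D = k \<Longrightarrow> card A * sum f D \<le> k * sum f A"
    and "x \<in> A" "y \<in> A"
  shows "f x = f y"
proof -
  obtain D where D: "D \<subseteq> A" "card D = k"
    and heaviest: "\<And>D'. D' \<subseteq> A \<Longrightarrow> card D' = k \<Longrightarrow> sum f D' \<le> sum f D"
    using obtain_heaviest_subset[OF assms(1)] assms(3) by (metis less_imp_le)
  define C where "C = A - D"
  have "finite D" "finite C" using finite_subset[OF D(1) assms(1)] assms(1) by (simp_all add: C_def)
  have cardC: "card C = card A - k" using D assms(1) by (simp add: C_def card_Diff_subset \<open>finite D\<close>)
  have dominated: "f c \<le> f b" if "b \<in> D" "c \<in> C" for b c
    using heaviest_subset_exchange[OF assms(1) D heaviest that(1)] that(2) by (simp add: C_def)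
  have "sum f A = sum f D + sum f C"
    using sum.subset_diff[OF D(1) assms(1)] by (simp add: C_def add.commute)
  then have "card C * sum f D \<le> k * sum f C"
    using average[OF D] cardC assms(3) by (simp add: algebra_simps diff_mult_distrib)
  moreover have "(\<Sum>(b, c)\<in>D \<times> C. f b) = card C * sum f D"
    by (simp add: sum.cartesian_product[symmetric] sum_distrib_left)
  moreover have "(\<Sum>(b, c)\<in>D \<times> C. f c) = k * sum f C"
    by (simp add: sum.cartesian_product[symmetric] D(2))
  ultimately have "\<not> (\<Sum>(b, c)\<in>D \<times> C. f c) < (\<Sum>(b, c)\<in>D \<times> C. f b)" by simp
  then have balanced: "f b = f c" if "b \<in> D" "c \<in> C" for b c
  proof (rule contrapos_np)
    assume "f b \<noteq> f c"
    with dominated[OF that] have "f c < f b" by simp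
    then show "(\<Sum>(b, c)\<in>D \<times> C. f c) < (\<Sum>(b, c)\<in>D \<times> C. f b)"
      using that dominated \<open>finite D\<close> \<open>finite C\<close> by (intro sum_strict_mono_ex1) auto
  qed
  obtain b0 c0 where "b0 \<in> D" "c0 \<in> C"
    using D(2) cardC assms(2,3) by (metis card.empty diff_is_0_eq equals0I leD not_gr0)
  have "f a = f c0" if "a \<in> A" for a
  proof (cases "a \<in> D")
    case False
    with that have "a \<in> C" by (simp add: C_def)
    then show ?thesis using balanced[OF \<open>b0 \<in> D\<close>] \<open>c0 \<in> C\<close> by metis
  qed (use balanced \<open>c0 \<in> C\<close> in blast)
  then show ?thesis using assms(5,6) by simp
qed

lemma download_lengths_equal:
  fixes R :: "nat \<Rightarrow> nat \<Rightarrow> 'f::{finite,field}"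
  assumes wt: "\<And>w. \<exists>i<l. w i \<noteq> 0 \<Longrightarrow>
      k < labelweight (\<Sum>j<s. nj j) (server_of s nj) (row_comb l (\<Sum>j<s. nj j) R w)"
    and "0 < k" "k < s" and rate: "l * s = (\<Sum>j<s. nj j) * (s - k)"
    and "i < s" "j < s"
  shows "nj i = nj j"
proof (rule eq_if_subset_sums_le_average[of "{..<s}" k nj])
  fix D assume D: "D \<subseteq> {..<s}" "card D = k"
  let ?N = "\<Sum>j<s. nj j"
  have "finite D" using D(1) finite_subset by blast
  then have "l \<le> ?N - sum nj D"
    using row_span_singleton_bound[OF wt, of D] card_server_of_notin[OF D(1), of nj] D(2) by simp
  moreover have "sum nj D \<le> ?N" using sum_mono2[OF _ D(1), of nj] by simp
  ultimately have "(l + sum nj D) * s \<le> ?N * s" by (intro mult_le_mono1) linarith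
  moreover have "?N * s = l * s + ?N * k"
    using rate assms(3) by (simp add: add_mult_distrib2[symmetric])
  ultimately have "l * s + sum nj D * s \<le> l * s + ?N * k"
    by (simp only: add_mult_distrib)
  then show "card {..<s} * sum nj D \<le> k * sum nj {..<s}"
    by (simp add: mult.commute)
qed (use assms in auto)

lemma download_lengths_pos:
  fixes R :: "nat \<Rightarrow> nat \<Rightarrow> 'f::{finite,field}"
  assumes wt: "\<And>w. \<exists>i<l. w i \<noteq> 0 \<Longrightarrow>
      k < labelweight (\<Sum>j<s. nj j) (server_of s nj) (row_comb l (\<Sum>j<s. nj j) R w)"
    and "0 < k" "k < s" and rate: "l * s = (\<Sum>j<s. nj j) * (s - k)"
    and "0 < (\<Sum>j<s. nj j)" "j < s"
  shows "0 < nj j"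
proof (rule ccontr)
  assume "\<not> 0 < nj j"
  then have "nj j' = 0" if "j' < s" for j'
    using download_lengths_equal[OF wt assms(2-4) that \<open>j < s\<close>] by simp
  with assms(5) show False by simp
qed

lemma rate_eq_imp_le:
  assumes "real l / real N = (real s - real k) / real s" "0 < s"
  shows "k \<le> s"
proof -
  have "0 \<le> (real s - real k) / real s" using assms(1) by (metis divide_nonneg_nonneg of_nat_0_le_iff)
  with assms(2) show ?thesis by (simp add: zero_le_divide_iff)
qed

lemma rate_eqD:
  assumes rate: "real l / real N = (real s - real k) / real s" and "0 < l" "0 < N" "0 < s"
  shows "k < s" "l * s = N * (s - k)" "real N = real l * real s / (real s - real k)"
proof -
  have eq: "real l * real s = real N * (real s - real k)"
    using rate assms(3,4) by (simp add: field_simps)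
  then have "0 < real N * (real s - real k)" using assms(2,4) by (metis of_nat_0_less_iff mult_pos_pos)
  then show "k < s" using assms(3) by (simp add: zero_less_mult_iff)
  moreover have "real (s - k) = real s - real k" using \<open>k < s\<close> by (simp add: of_nat_diff)
  ultimately show "l * s = N * (s - k)" using eq by (metis of_nat_eq_iff of_nat_mult)
  show "real N = real l * real s / (real s - real k)"
    using eq \<open>k < s\<close> by (simp add: field_simps)
qed

section \<open>Labelweight of the codewords\<close>

locale cnf_hss =
  fixes l m s t :: nat and nj :: "nat \<Rightarrow> nat"
    and fs :: "nat \<Rightarrow> 'f::field mpoly"
    and Eval :: "(nat \<Rightarrow> 'f mpoly) \<Rightarrow> nat \<Rightarrow> (nat \<Rightarrow> nat \<Rightarrow> nat set \<Rightarrow> 'f) \<Rightarrow> nat \<Rightarrow> 'f"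
    and R :: "nat \<Rightarrow> nat \<Rightarrow> 'f"
  assumes correct: "\<And>x Y. (\<forall>i<l. \<forall>k<m. Y i k \<in> cnf_rand s t (x i k)) \<Longrightarrow>
        \<forall>i<l. (\<Sum>r<(\<Sum>j<s. nj j). R i r *
                 concat_out s nj
                   (\<lambda>j. Eval fs j (\<lambda>i' k. if i' < l \<and> k < m then cnf_share s t j (Y i' k) else (\<lambda>_. 0)))
                   r)
              = mpoly_eval (fs i) (x i)"
begin

definition download :: "(nat \<Rightarrow> nat \<Rightarrow> nat set \<Rightarrow> 'f) \<Rightarrow> nat \<Rightarrow> 'f" where
  "download Y = concat_out s nj
     (\<lambda>j. Eval fs j (\<lambda>i' k. if i' < l \<and> k < m then cnf_share s t j (Y i' k) else (\<lambda>_. 0)))"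

lemma decode_lincomb:
  assumes "\<forall>i<l. \<forall>k<m. Y i k \<in> cnf_rand s t (x i k)"
  shows "(\<Sum>i<l. w i * mpoly_eval (fs i) (x i))
       = (\<Sum>r<(\<Sum>j<s. nj j). (\<Sum>i<l. w i * R i r) * download Y r)"
proof -
  let ?N = "\<Sum>j<s. nj j"
  have "\<forall>i<l. (\<Sum>r<?N. R i r * download Y r) = mpoly_eval (fs i) (x i)"
    using correct[OF assms] by (simp add: download_def)
  then have "(\<Sum>i<l. w i * mpoly_eval (fs i) (x i)) = (\<Sum>i<l. w i * (\<Sum>r<?N. R i r * download Y r))"
    by (intro sum.cong) auto
  also have "\<dots> = (\<Sum>i<l. \<Sum>r<?N. w i * R i r * download Y r)"
    by (simp add: sum_distrib_left mult.assoc)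
  also have "\<dots> = (\<Sum>r<?N. (\<Sum>i<l. w i * R i r) * download Y r)"
    by (subst sum.swap) (simp add: sum_distrib_right)
  finally show ?thesis .
qed

lemma download_eq_if_shares_eq:
  assumes "\<And>i k. cnf_share s t (server_of s nj r) (Y i k) = cnf_share s t (server_of s nj r) (Y' i k)"
  shows "download Y r = download Y' r"
  using assms by (simp add: download_def concat_out_def cong: if_cong)

text \<open>Servers in T k never see the k-th input, so their symbols do not depend on whether k \<in> E.\<close>

lemma alternating_sum_download_eq_0:
  assumes "finite K" "k \<in> K" "server_of s nj r \<in> T k"
  shows "(\<Sum>E\<in>Pow K. (-1) ^ card E *
           download (cnf_point_sharing T (\<lambda>i. if i = i0 then indicator E else (\<lambda>_. 0))) r) = 0"
  using assms
  by (intro alternating_sum_Pow_eq_0 download_eq_if_shares_eq)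
    (auto simp: indicator_def intro!: cnf_share_point_sharing_eq)

lemma labelweight_row_comb_gt:
  assumes "d * t \<le> s" "0 < d"
    and top: "fs i0 \<in> POLY d m" "a0 \<in> Poly_Mapping.keys (fs i0)" "d \<le> card (Poly_Mapping.keys a0)"
    and w: "i0 < l" "w i0 \<noteq> 0"
  shows "d * t < labelweight (\<Sum>j<s. nj j) (server_of s nj) (row_comb l (\<Sum>j<s. nj j) R w)"
proof (rule ccontr)
  define N where "N = (\<Sum>j<s. nj j)"
  define c where "c r = (\<Sum>i<l. w i * R i r)" for r
  define S where "S = {server_of s nj r | r. r < N \<and> c r \<noteq> 0}"
  define K where "K = Poly_Mapping.keys a0"
  have "total_deg a0 \<le> d" using top by (auto simp: POLY_def)
  then have "card K = d" using card_keys_le_total_deg[of a0] top(3) by (simp add: K_def)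
  assume "\<not> ?thesis"
  then have "card S \<le> card K * t"
    by (simp add: labelweight_def S_def c_def N_def row_comb_def \<open>card K = d\<close> cong: conj_cong)
  moreover have "S \<subseteq> {0..<s}" using server_of_bounds(1)[of _ nj s] by (auto simp: S_def N_def)
  moreover have "t \<le> s" using assms(1,2) le_trans[of t "d * t" s] by simp
  ultimately obtain T where T: "\<And>k. T k \<in> tsets s t" "S \<subseteq> (\<Union>k\<in>K. T k)"
    using cover_by_tsets[of S s K t] assms(1) \<open>card K = d\<close> by (auto simp: K_def)
  define x :: "nat set \<Rightarrow> nat \<Rightarrow> nat \<Rightarrow> 'f"
    where "x E = (\<lambda>i. if i = i0 then indicator E else (\<lambda>_. 0))" for E
  have "w i0 * ((-1) ^ card K * Poly_Mapping.lookup (fs i0) a0)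
      = (\<Sum>E\<in>Pow K. (-1) ^ card E * (\<Sum>i<l. w i * mpoly_eval (fs i) (x E i)))"
    using alternating_sum_indicator_lincomb[where fs = fs and w = w, OF top assms(2) w(1)]
    by (simp add: x_def K_def)
  also have "\<dots> = (\<Sum>E\<in>Pow K. (-1) ^ card E * (\<Sum>r<N. c r * download (cnf_point_sharing T (x E)) r))"
  proof (rule sum.cong[OF refl])
    fix E
    have "(\<Sum>i<l. w i * mpoly_eval (fs i) (x E i)) = (\<Sum>r<N. c r * download (cnf_point_sharing T (x E)) r)"
      unfolding c_def N_def by (rule decode_lincomb) (simp add: cnf_point_sharing_in_cnf_rand T(1))
    then show "(-1) ^ card E * (\<Sum>i<l. w i * mpoly_eval (fs i) (x E i))
        = (-1) ^ card E * (\<Sum>r<N. c r * download (cnf_point_sharing T (x E)) r)" by simp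
  qed
  also have "\<dots> = (\<Sum>r<N. c r * (\<Sum>E\<in>Pow K. (-1) ^ card E * download (cnf_point_sharing T (x E)) r))"
    by (rule alternating_sum_lincomb)
  also have "\<dots> = 0"
  proof (intro sum.neutral ballI)
    fix r assume "r \<in> {..<N}"
    then have "c r = 0 \<or> (\<exists>k\<in>K. server_of s nj r \<in> T k)" using T(2) by (auto simp: S_def)
    then show "c r * (\<Sum>E\<in>Pow K. (-1) ^ card E * download (cnf_point_sharing T (x E)) r) = 0"
      using alternating_sum_download_eq_0[of K] by (auto simp: K_def x_def)
  qed
  finally show False using w(2) top(2) by (simp add: in_keys_iff)
qed

lemma labelweight_row_comb_gt_if_nontrivial:
  assumes "d * t \<le> s" "0 < d"
    and "\<And>i. i < l \<Longrightarrow> fs i \<in> POLY d m"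
    and "\<And>i. i < l \<Longrightarrow> \<exists>a\<in>Poly_Mapping.keys (fs i). d \<le> card (Poly_Mapping.keys a)"
    and "\<exists>i<l. w i \<noteq> 0"
  shows "d * t < labelweight (\<Sum>j<s. nj j) (server_of s nj) (row_comb l (\<Sum>j<s. nj j) R w)"
proof -
  from assms(5) obtain i0 where "i0 < l" "w i0 \<noteq> 0" by blast
  moreover from assms(4)[OF this(1)] obtain a0
    where "a0 \<in> Poly_Mapping.keys (fs i0)" "d \<le> card (Poly_Mapping.keys a0)" by blast
  ultimately show ?thesis using assms(1-3) by (intro labelweight_row_comb_gt) auto
qed

end

theorem mainTheorem2:
  fixes l t s d m :: nat
    and Fc :: "(nat \<Rightarrow> ('f::{finite,field}) mpoly) set"
    and nj :: "nat \<Rightarrow> nat"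
    and Eval :: "(nat \<Rightarrow> 'f mpoly) \<Rightarrow> nat \<Rightarrow> (nat \<Rightarrow> nat \<Rightarrow> nat set \<Rightarrow> 'f) \<Rightarrow> nat \<Rightarrow> 'f"
    and R :: "nat \<Rightarrow> nat \<Rightarrow> 'f"
  assumes pos: "l > 0" "t > 0" "s > 0" "d > 0" "m > 0"
    and md: "m \<ge> d"
    and Fc_sub: "Fc \<subseteq> POLY_tuples l d m"
    and nontriv: "nontrivial_class l d Fc"
    and priv: "cnf_private TYPE('f) s t"
    and correct: "\<And>fs x Y. fs \<in> Fc \<Longrightarrow>
        (\<forall>i<l. \<forall>k<m. Y i k \<in> cnf_rand s t (x i k)) \<Longrightarrow>
        \<forall>i<l. (\<Sum>r<(\<Sum>j<s. nj j). R i r *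
                 concat_out s nj
                   (\<lambda>j. Eval fs j (\<lambda>i' k. if i' < l \<and> k < m then cnf_share s t j (Y i' k) else (\<lambda>_. 0)))
                   r)
              = mpoly_eval (fs i) (x i)"
    and rate: "real l / real (\<Sum>j<s. nj j) = (real s - real d * real t) / real s"
  shows "\<exists>n C L. real n = real l * real s / (real s - real d * real t)
           \<and> C = row_span l n R \<and> L = server_of s nj
           \<and> linear_code n C \<and> code_rate n C = (real s - real d * real t) / real s
           \<and> is_labeling n s L
           \<and> code_labelweight n L C \<ge> d * t + 1"
proof -
  define N where "N = (\<Sum>j<s. nj j)"
  obtain fs where fs: "fs \<in> Fc"
    and top: "\<And>i. i < l \<Longrightarrow> \<exists>a\<in>Poly_Mapping.keys (fs i). d \<le> card (Poly_Mapping.keys a)"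
    using nontriv unfolding nontrivial_class_def by blast
  interpret cnf_hss l m s t nj fs Eval R
    by unfold_locales (rule correct[OF fs])
  have rate_N: "real l / real N = (real s - real (d * t)) / real s"
    using rate by (simp add: N_def)
  have "\<And>i. i < l \<Longrightarrow> fs i \<in> POLY d m" using Fc_sub fs by (auto simp: POLY_tuples_def)
  note wt = labelweight_row_comb_gt_if_nontrivial[OF rate_eq_imp_le[OF rate_N pos(3)] pos(4) this top,
      folded N_def]
  have "d * t < labelweight N (server_of s nj) (row_comb l N R (\<lambda>_. 1))"
    using pos(1) by (intro wt) auto
  then have "0 < N" using labelweight_le[of N "server_of s nj" "row_comb l N R (\<lambda>_. 1)"] by linarith
  note rate_nat = rate_eqD[OF rate_N pos(1) this pos(3)]
  have "is_labeling N s (server_of s nj)"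
    unfolding N_def using pos(2,4) \<open>0 < N\<close> rate_nat(1,2)
    by (intro is_labeling_server_of download_lengths_pos[OF wt[unfolded N_def]]) (simp_all add: N_def)
  moreover have "code_dim (row_span l N R) = l"
    using wt by (intro code_dim_row_span) (force simp: labelweight_def)
  ultimately show ?thesis
  proof (intro exI conjI)
    show "code_rate N (row_span l N R) = (real s - real d * real t) / real s"
      using rate_N \<open>code_dim (row_span l N R) = l\<close> by (simp add: code_rate_def)
    show "d * t + 1 \<le> code_labelweight N (server_of s nj) (row_span l N R)"
      using code_labelweight_row_span_gt[OF pos(1) wt] by simp
  qed (use rate_nat(3) linear_code_row_span in simp_all)
qed

end
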